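(* Let $\mathcal{H}\subseteq\{0,1\}^{\mathcal{X}}$, $m\in\mathbb{N}$, and let $C\subseteq V_m(\mathcal{H})$ be a finite clique in $G_m(\mathcal{H})$. Then there exists $x\in\mathcal{X}$ such that at least $\frac{|C|-1}{2m}$ datasets in $C$ contain the labeled example $(x,1)$ and at least $\frac{|C|-1}{2m}$ datasets in $C$ contain the labeled example $(x,0)$.
   Context: A dataset of size $m$ is $S=((x_1,y_1),\dots,(x_m,y_m))\in(\mathcal{X}\times\{0,1\})^m$, and $S$ contains $(x,y)$ if $(x,y)=(x_i,y_i)$ for some $i$; $S$ is $\mathcal{H}$-realizable if some $h\in\mathcal{H}$ satisfies $h(x_i)=y_i$ for all $i$; $V_m(\mathcal{H})$ is the set of realizable datasets of size $m$; $G_m(\mathcal{H})$ is the graph on $V_m(\mathcal{H})$ with $S,S'$ adjacent iff there is $x$ with $(x,0)$ contained in $S$ and $(x,1)$ contained in $S'$. *)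

theory Defs
  imports Main Complex_Main
begin

text \<open>Labels {0,1} are encoded as bool: False = 0, True = 1.
  A dataset of size m is a list of length m of labelled examples;
  "S contains (x,y)" means (x,y) occurs in S.\<close>

definition contains :: "('x \<times> bool) list \<Rightarrow> 'x \<Rightarrow> bool \<Rightarrow> bool" where
  "contains S x y \<longleftrightarrow> (x, y) \<in> set S"

definition realizable :: "('x \<Rightarrow> bool) set \<Rightarrow> ('x \<times> bool) list \<Rightarrow> bool" where
  "realizable H S \<longleftrightarrow> (\<exists>h\<in>H. \<forall>i<length S. h (fst (S ! i)) = snd (S ! i))"

definition V :: "('x \<Rightarrow> bool) set \<Rightarrow> nat \<Rightarrow> ('x \<times> bool) list set" where
  "V H m = {S. length S = m \<and> realizable H S}"

text \<open>Adjacency in G_m(H) (undirected graph: symmetric closure of the defining relation).\<close>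
definition adjG :: "('x \<Rightarrow> bool) set \<Rightarrow> nat \<Rightarrow> ('x \<times> bool) list \<Rightarrow> ('x \<times> bool) list \<Rightarrow> bool" where
  "adjG H m S S' \<longleftrightarrow> S \<in> V H m \<and> S' \<in> V H m \<and>
     ((\<exists>x. contains S x False \<and> contains S' x True) \<or> (\<exists>x. contains S' x False \<and> contains S x True))"

definition is_clique :: "('x \<Rightarrow> bool) set \<Rightarrow> nat \<Rightarrow> ('x \<times> bool) list set \<Rightarrow> bool" where
  "is_clique H m C \<longleftrightarrow> C \<subseteq> V H m \<and> (\<forall>S\<in>C. \<forall>S'\<in>C. S \<noteq> S' \<longrightarrow> adjG H m S S')"

end

theory Submission
  imports Defs
begin

text \<open>Count ordered pairs of distinct datasets in the clique. Each such pair is witnessed by a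
  point \<open>x\<close> at which one dataset is labelled 0 and the other 1, so if \<open>a\<^sub>x\<close> and \<open>b\<^sub>x\<close> datasets
  contain \<open>(x,1)\<close> and \<open>(x,0)\<close>, then \<open>|C|(|C|-1) \<le> 2 \<Sum>\<^sub>x a\<^sub>x b\<^sub>x\<close>. On the other hand every dataset
  has only \<open>m\<close> examples, so \<open>\<Sum>\<^sub>x (a\<^sub>x + b\<^sub>x) \<le> |C| m\<close>. Since \<open>a\<^sub>x b\<^sub>x \<le> min(a\<^sub>x,b\<^sub>x)(a\<^sub>x + b\<^sub>x)\<close>,
  the point maximising \<open>min(a\<^sub>x,b\<^sub>x)\<close> has \<open>2 m min(a\<^sub>x,b\<^sub>x) \<ge> |C| - 1\<close>.\<close>

lemma card_filter_sum_swap: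
  assumes "finite X" "finite C"
  shows "(\<Sum>x\<in>X. card {S\<in>C. P x S}) = (\<Sum>S\<in>C. card {x\<in>X. P x S})"
proof -
  have card_eq: "card {z\<in>Z. Q z} = (\<Sum>z\<in>Z. if Q z then 1 else 0)" if "finite Z" for Z and Q :: "'c \<Rightarrow> bool"
    using that by (simp add: sum.If_cases Int_def conj_commute)
  have "(\<Sum>x\<in>X. card {S\<in>C. P x S}) = (\<Sum>x\<in>X. \<Sum>S\<in>C. if P x S then 1 else 0)"
    using assms by (simp add: card_eq)
  also have "\<dots> = (\<Sum>S\<in>C. \<Sum>x\<in>X. if P x S then 1 else 0)"
    by (rule sum.swap)
  also have "\<dots> = (\<Sum>S\<in>C. card {x\<in>X. P x S})"
    using assms by (simp add: card_eq)
  finally show ?thesis .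
qed

lemma card_labelled_points_le_length:
  fixes S :: "('x \<times> bool) list"
  assumes "finite X"
  shows "card {x\<in>X. (x, True) \<in> set S} + card {x\<in>X. (x, False) \<in> set S} \<le> length S"
proof -
  let ?pos = "(\<lambda>x. (x, True)) ` {x\<in>X. (x, True) \<in> set S}"
  let ?neg = "(\<lambda>x. (x, False)) ` {x\<in>X. (x, False) \<in> set S}"
  have "card {x\<in>X. (x, True) \<in> set S} + card {x\<in>X. (x, False) \<in> set S} = card ?pos + card ?neg"
    by (simp add: card_image inj_on_def)
  also have "\<dots> = card (?pos \<union> ?neg)"
    using assms by (intro card_Un_disjoint[symmetric]) auto
  also have "\<dots> \<le> card (set S)"
    by (rule card_mono) auto
  also have "\<dots> \<le> length S"
    by (rule card_length)
  finally show ?thesis .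
qed

lemma sum_card_contains_le:
  assumes "finite X" "finite C" "\<And>S. S \<in> C \<Longrightarrow> length S \<le> m"
  shows "(\<Sum>x\<in>X. card {S\<in>C. contains S x True} + card {S\<in>C. contains S x False}) \<le> card C * m"
proof -
  have "(\<Sum>x\<in>X. card {S\<in>C. contains S x True} + card {S\<in>C. contains S x False})
      = (\<Sum>S\<in>C. card {x\<in>X. (x, True) \<in> set S} + card {x\<in>X. (x, False) \<in> set S})"
    unfolding sum.distrib contains_def
    using card_filter_sum_swap[OF assms(1,2), of "\<lambda>x S. (x, True) \<in> set S"]
      card_filter_sum_swap[OF assms(1,2), of "\<lambda>x S. (x, False) \<in> set S"]
    by simp
  also have "\<dots> \<le> (\<Sum>S\<in>C. m)"
    using card_labelled_points_le_length[OF assms(1)] assms(3) by (intro sum_mono) (meson le_trans)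
  finally show ?thesis
    by simp
qed

lemma card_mult_pred_le_sum_mult_card:
  assumes "finite C" "finite X" "\<And>x. A x \<subseteq> C" "\<And>x. B x \<subseteq> C"
    and separated: "\<And>S S'. S \<in> C \<Longrightarrow> S' \<in> C \<Longrightarrow> S \<noteq> S' \<Longrightarrow>
      \<exists>x\<in>X. S \<in> B x \<and> S' \<in> A x \<or> S' \<in> B x \<and> S \<in> A x"
  shows "card C * (card C - 1) \<le> 2 * (\<Sum>x\<in>X. card (A x) * card (B x))"
proof -
  define P where "P = (\<Union>x\<in>X. B x \<times> A x)"
  define D where "D = C \<times> C - (\<lambda>S. (S, S)) ` C"
  have finite_P: "finite P"
    unfolding P_def by (rule finite_subset[of _ "C \<times> C"]) (use assms(1-4) in auto)
  have "card D = card C * card C - card C"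
    unfolding D_def using assms(1)
    by (subst card_Diff_subset) (auto simp: card_cartesian_product card_image inj_on_def)
  then have "card C * (card C - 1) = card D"
    by (simp add: diff_mult_distrib2)
  also have "\<dots> \<le> card (P \<union> prod.swap ` P)"
    using finite_P separated unfolding D_def P_def
    by (intro card_mono) (auto simp: image_iff, metis)
  also have "\<dots> \<le> 2 * card P"
    using card_Un_le[of P "prod.swap ` P"] card_image_le[OF finite_P, of prod.swap] by linarith
  also have "card P \<le> (\<Sum>x\<in>X. card (B x \<times> A x))"
    unfolding P_def using assms(2) by (rule card_UN_le)
  finally show ?thesis
    by (simp add: card_cartesian_product mult.commute)
qed

lemma mult_le_min_mult_add: "(a::nat) * b \<le> min a b * (a + b)"
  by (cases "a \<le> b") (simp_all add: min_def algebra_simps)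

lemma exists_min_ge_by_averaging:
  fixes a b :: "'i \<Rightarrow> nat"
  assumes "finite X"
    and products: "n * (n - 1) \<le> 2 * (\<Sum>x\<in>X. a x * b x)"
    and sums: "(\<Sum>x\<in>X. a x + b x) \<le> n * m"
  shows "\<exists>x. n - 1 \<le> 2 * m * min (a x) (b x)"
proof (cases "X = {}")
  case True
  then have "n - 1 = 0"
    using products by auto
  then show ?thesis
    by simp
next
  case False
  define \<mu> where "\<mu> = Max ((\<lambda>x. min (a x) (b x)) ` X)"
  have "\<mu> \<in> (\<lambda>x. min (a x) (b x)) ` X"
    unfolding \<mu>_def using assms(1) False by (intro Max_in) auto
  then obtain x where \<mu>_eq: "min (a x) (b x) = \<mu>"
    by auto
  have "n * (n - 1) \<le> 2 * (\<Sum>x\<in>X. min (a x) (b x) * (a x + b x))"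
    using products mult_le_min_mult_add by (meson le_trans mult_le_mono2 sum_mono)
  also have "\<dots> \<le> 2 * (\<Sum>x\<in>X. \<mu> * (a x + b x))"
    unfolding \<mu>_def using assms(1) by (intro mult_le_mono2 sum_mono mult_le_mono1) simp
  also have "\<dots> = 2 * \<mu> * (\<Sum>x\<in>X. a x + b x)"
    by (simp add: sum_distrib_left mult.assoc)
  also have "\<dots> \<le> n * (2 * m * \<mu>)"
    using sums by (simp add: algebra_simps)
  finally have "n - 1 \<le> 2 * m * \<mu>"
    by (cases "n = 0") simp_all
  then show ?thesis
    using \<mu>_eq by auto
qed

lemma clique_separated:
  assumes "is_clique H m C" "S \<in> C" "S' \<in> C" "S \<noteq> S'"
  shows "\<exists>x\<in>(\<Union>S\<in>C. fst ` set S).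
    contains S x False \<and> contains S' x True \<or> contains S' x False \<and> contains S x True"
proof -
  have "adjG H m S S'"
    using assms unfolding is_clique_def by blast
  then show ?thesis
    using assms(2,3) unfolding adjG_def contains_def by force
qed

lemma divide_le_of_nat_pred_le:
  assumes "n - 1 \<le> 2 * m * k"
  shows "(real n - 1) / (2 * real m) \<le> real k"
proof -
  have "real n - 1 \<le> real (n - 1)"
    by (cases n) simp_all
  also have "\<dots> \<le> 2 * real m * real k"
    using of_nat_mono[OF assms] by simp
  finally show ?thesis
    by (cases "m = 0") (simp_all add: pos_divide_le_eq mult.commute)
qed

theorem mainTheorem10:
  fixes H :: "('x \<Rightarrow> bool) set" and m :: nat and C :: "('x \<times> bool) list set"
  assumes "finite C" and "is_clique H m C"
  shows "\<exists>x. real (card {S\<in>C. contains S x True}) \<ge> (real (card C) - 1) / (2 * real m)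
            \<and> real (card {S\<in>C. contains S x False}) \<ge> (real (card C) - 1) / (2 * real m)"
proof -
  define X where "X = (\<Union>S\<in>C. fst ` set S)"
  define A where "A x = {S\<in>C. contains S x True}" for x
  define B where "B x = {S\<in>C. contains S x False}" for x
  have "finite X"
    unfolding X_def using assms(1) by simp
  have "card C * (card C - 1) \<le> 2 * (\<Sum>x\<in>X. card (A x) * card (B x))"
    using assms(1) \<open>finite X\<close> clique_separated[OF assms(2)]
    by (intro card_mult_pred_le_sum_mult_card) (auto simp: A_def B_def X_def)
  moreover have "(\<Sum>x\<in>X. card (A x) + card (B x)) \<le> card C * m"
    unfolding A_def B_def using sum_card_contains_le[OF \<open>finite X\<close> assms(1)] assms(2)
    by (simp add: is_clique_def V_def subset_iff)
  ultimately obtain x where "card C - 1 \<le> 2 * m * min (card (A x)) (card (B x))"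
    using exists_min_ge_by_averaging[OF \<open>finite X\<close>, of "card C" "\<lambda>x. card (A x)" "\<lambda>x. card (B x)"]
    by blast
  then have "(real (card C) - 1) / (2 * real m) \<le> real (min (card (A x)) (card (B x)))"
    by (rule divide_le_of_nat_pred_le)
  then show ?thesis
    unfolding A_def B_def of_nat_min min.bounded_iff by blast
qed

end
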